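(* For every sufficiently large $n$, there exists an instance of the MaxMinDegree Arborescence problem on a layered directed graph $G$ of depth $3$ with $\Theta(n)$ vertices, such that $k_u=n^{\Omega(1)}$ for every non-sink vertex $u$, and such that the integrality gap of $1$ round (level $1$) of the Sherali-Adams hierarchy applied to the assignment LP is at least $n^{\Omega(1)}$.
   Context: MaxMinDegree Arborescence (MMDA) on layered graphs: a layered directed graph $G=(V,E)$ of depth $\ell$ has vertex set $V=L_0\dot\cup L_1\dot\cup\cdots\dot\cup L_\ell$, every edge goes from some $L_i$ to $L_{i+1}$, $L_0=\{s\}$ where $s$ is the source, and the vertices of $L_\ell$ are the sinks. Every non-sink vertex $u$ has a required out-degree $k_u>0$. For $\alpha\ge 1$, an $\alpha$-approximate integral solution is an edge set $T\subseteq E$ such that $|\delta^+_T(s)|\ge k_s/\alpha$, every vertex has in-degree at most $1$ in $T$, and every non-sink vertex $v\ne s$ with in-degree $1$ in $T$ satisfies $|\delta^+_T(v)|\ge k_v/\alpha$. The size $n$ of the instance is its number of vertices. The assignment LP has a variable $x_e$ for each $e\in E$ and constraints $x(\delta^+(s))\ge k_s$; $x(\delta^+(v))\ge k_v\, x(\delta^-(v))$ for every $v\notin\{s\}\cup L_\ell$; $x(\delta^-(v))\le 1$ for all $v$; $0\le x_e\le 1$. The level-$r$ Sherali-Adams relaxation of an LP $\{x\in[0,1]^N: a^Tx\le b \text{ for each constraint}\}$ has variables $y_I$ for $I\subseteq[N]$, $|I|\le r+1$, with $y_\emptyset=1$, and for every constraint $a^Tx\le b$ of the LP (including the bounds $0\le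 x_i\le 1$) and all disjoint $V_0,V_1\subseteq[N]$ with $|V_0|+|V_1|\le r$ it requires $\sum_{W\subseteq V_0}(-1)^{|W|}\big(b\,y_{V_1\cup W}-\sum_i a_i\, y_{V_1\cup W\cup\{i\}}\big)\ge 0$ (the linearization of $\prod_{i\in V_1}x_i\prod_{i\in V_0}(1-x_i)(b-a^Tx)\ge 0$ using $x_i^2=x_i$); the projected solution is $x_i=y_{\{i\}}$. Integrality gap of a relaxation $R$ on an instance: $\alpha_{\mathrm{int}}/\alpha_R$, where $\alpha_{\mathrm{int}}$ is the smallest $\alpha$ for which an $\alpha$-approximate integral solution exists and $\alpha_R$ is the smallest $\alpha$ for which $R$ is feasible when every $k_u$ is replaced by $k_u/\alpha$. *)

theory Defs
  imports Complex_Main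
begin

type_synonym vtx = nat
type_synonym edge = "nat \<times> nat"

definition out_edges :: "edge set \<Rightarrow> vtx \<Rightarrow> edge set" where
  "out_edges E v = {e \<in> E. fst e = v}"

definition in_edges :: "edge set \<Rightarrow> vtx \<Rightarrow> edge set" where
  "in_edges E v = {e \<in> E. snd e = v}"

definition layered_graph ::
  "vtx set \<Rightarrow> edge set \<Rightarrow> vtx \<Rightarrow> nat \<Rightarrow> (nat \<Rightarrow> vtx set) \<Rightarrow> bool" where
  "layered_graph V E s l L \<longleftrightarrow>
     finite V \<and>
     V = (\<Union>i\<in>{0..l}. L i) \<and>
     (\<forall>i\<in>{0..l}. \<forall>j\<in>{0..l}. i \<noteq> j \<longrightarrow> L i \<inter> L j = {}) \<and>
     L 0 = {s} \<and>
     E \<subseteq> (\<Union>i\<in>{0..<l}. L i \<times> L (Suc i))"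

definition mmda_instance ::
  "vtx set \<Rightarrow> edge set \<Rightarrow> vtx \<Rightarrow> nat \<Rightarrow> (nat \<Rightarrow> vtx set) \<Rightarrow> (vtx \<Rightarrow> nat) \<Rightarrow> bool" where
  "mmda_instance V E s l L k \<longleftrightarrow>
     layered_graph V E s l L \<and> (\<forall>u \<in> V - L l. k u > 0)"

definition integral_approx ::
  "vtx set \<Rightarrow> edge set \<Rightarrow> vtx \<Rightarrow> nat \<Rightarrow> (nat \<Rightarrow> vtx set) \<Rightarrow> (vtx \<Rightarrow> nat) \<Rightarrow> real \<Rightarrow> bool" where
  "integral_approx V E s l L k \<alpha> \<longleftrightarrow>
     (\<exists>T. T \<subseteq> E \<and>
        real (card (out_edges T s)) \<ge> real (k s) / \<alpha> \<and>
        (\<forall>v\<in>V. card (in_edges T v) \<le> 1) \<and>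
        (\<forall>v\<in>V - L l - {s}. card (in_edges T v) = 1 \<longrightarrow>
            real (card (out_edges T v)) \<ge> real (k v) / \<alpha>))"

text \<open>A linear constraint a^T x \<le> b is a pair (a, b).\<close>
type_synonym 'e lin_constr = "('e \<Rightarrow> real) \<times> real"

definition with_bounds :: "'e set \<Rightarrow> 'e lin_constr set \<Rightarrow> 'e lin_constr set" where
  "with_bounds N C = C \<union> {((\<lambda>j. if j = i then -1 else 0), 0) | i. i \<in> N}
                       \<union> {((\<lambda>j. if j = i then 1 else 0), 1) | i. i \<in> N}"

text \<open>Level-r Sherali-Adams relaxation of {x \<in> [0,1]^N : constraints C}; y I for |I| \<le> r+1.\<close>
definition SA_feasible :: "'e set \<Rightarrow> 'e lin_constr set \<Rightarrow> nat \<Rightarrow> ('e set \<Rightarrow> real) \<Rightarrow> bool" where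
  "SA_feasible N C r y \<longleftrightarrow>
     y {} = 1 \<and>
     (\<forall>(a, b) \<in> with_bounds N C. \<forall>V0 V1.
        V0 \<subseteq> N \<and> V1 \<subseteq> N \<and> V0 \<inter> V1 = {} \<and> card V0 + card V1 \<le> r \<longrightarrow>
        (\<Sum>W\<in>Pow V0. (-1) ^ card W *
            (b * y (V1 \<union> W) - (\<Sum>i\<in>N. a i * y (V1 \<union> W \<union> {i})))) \<ge> 0)"

definition assignment_LP ::
  "vtx set \<Rightarrow> edge set \<Rightarrow> vtx \<Rightarrow> nat \<Rightarrow> (nat \<Rightarrow> vtx set) \<Rightarrow> (vtx \<Rightarrow> real) \<Rightarrow> edge lin_constr set" where
  "assignment_LP V E s l L k' =
     {((\<lambda>e. if e \<in> out_edges E s then -1 else 0), - k' s)}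
     \<union> {((\<lambda>e. (if e \<in> in_edges E v then k' v else 0) - (if e \<in> out_edges E v then 1 else 0)), 0)
          | v. v \<in> V - ({s} \<union> L l)}
     \<union> {((\<lambda>e. if e \<in> in_edges E v then 1 else 0), 1) | v. v \<in> V}"

definition SA_assign_feasible ::
  "nat \<Rightarrow> vtx set \<Rightarrow> edge set \<Rightarrow> vtx \<Rightarrow> nat \<Rightarrow> (nat \<Rightarrow> vtx set) \<Rightarrow> (vtx \<Rightarrow> nat) \<Rightarrow> real \<Rightarrow> bool" where
  "SA_assign_feasible r V E s l L k \<beta> \<longleftrightarrow>
     (\<exists>y. SA_feasible E (assignment_LP V E s l L (\<lambda>u. real (k u) / \<beta>)) r y)"

end

theory Submission
  imports Defs "HOL-Library.Countable"
begin

(*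
  For a parameter K the instance is a layered graph of depth 3: the root has the K^3 hubs (u, j),
  u < K, j < K^2, as children; hub (u, j) has the K^2 mids (u, j, l) as children; every mid has a
  private leaf and, in addition, the K leaves shared by all mids of the same hub.  Isolated padding
  sinks bring the number of vertices to Theta(n) for K ~ n^(1/5), and every demand is K.

  Integrally, the root enters some hub that keeps r >= K / alpha mids, each of which needs r - 1 of
  the K shared leaves of that hub, and these sets are disjoint; so r (r - 1) <= K, that is,
  alpha >= sqrt K / 2.

  Fractionally, for every w < K^2 there is a point x_w of the assignment LP with demands K: the
  root picks all hubs (u, w); every hub (u, j) sends 1 to its mid (u, j, w), and hub (u, w) also
  sends 1/K to its other mids; the mids (u, j, w) take all shared leaves of their hub, and every mid
  with positive inflow takes its private leaf.  The uniform mixture y_S = avg_w prod_(i in S) x_w(i)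
  is feasible for level 1 of Sherali-Adams with the unscaled demands: the product of a constraint
  with an edge variable is nonnegative pointwise whenever x_w is integral on that edge, and the one
  product that fails pointwise -- the degree constraint of mid (u, j, l) times its in-edge -- is
  repaired by averaging, since scenario w = l contributes 1 and scenario w = j only -(1 - 1/K).
*)

section \<open>Level 1 of Sherali--Adams for mixtures of points\<close>

definition slack :: "'e set \<Rightarrow> ('e \<Rightarrow> real) \<Rightarrow> real \<Rightarrow> ('e \<Rightarrow> real) \<Rightarrow> real" where
  "slack N a b x = b - (\<Sum>i\<in>N. a i * x i)"

lemma mixture_linearized_constraint:
  assumes "(\<Sum>w\<in>\<Omega>. p w) = 1"
  shows "b * (\<Sum>w\<in>\<Omega>. p w * (\<Prod>k\<in>{}. x w k))
           - (\<Sum>i\<in>N. a i * (\<Sum>w\<in>\<Omega>. p w * (\<Prod>k\<in>{i}. x w k)))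
         = (\<Sum>w\<in>\<Omega>. p w * slack N a b (x w))"
proof -
  have "(\<Sum>i\<in>N. a i * (\<Sum>w\<in>\<Omega>. p w * (\<Prod>k\<in>{i}. x w k)))
      = (\<Sum>w\<in>\<Omega>. p w * (\<Sum>i\<in>N. a i * x w i))"
    by (simp add: sum_distrib_left sum.swap[of _ N] algebra_simps)
  then show ?thesis
    using assms
    by (simp add: slack_def right_diff_distrib sum_subtractf sum_distrib_right[symmetric])
qed

lemma mixture_linearized_product:
  assumes "finite N" "j \<in> N"
  shows "b * (\<Sum>w\<in>\<Omega>. p w * (\<Prod>k\<in>{j}. x w k))
           - (\<Sum>i\<in>N. a i * (\<Sum>w\<in>\<Omega>. p w * (\<Prod>k\<in>{i, j}. x w k)))
         = (\<Sum>w\<in>\<Omega>. p w * (x w j * (slack N a b (x w) - a j * (1 - x w j))))"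
proof -
  have "a i * (\<Prod>k\<in>{i, j}. x w k)
      = x w j * (a i * x w i) + (if i = j then a j * (x w j * (1 - x w j)) else 0)" for w i
    by (cases "i = j") (simp_all add: algebra_simps)
  then have inner: "(\<Sum>i\<in>N. a i * (\<Prod>k\<in>{i, j}. x w k))
      = x w j * (\<Sum>i\<in>N. a i * x w i) + a j * (x w j * (1 - x w j))" for w
    using assms by (simp add: sum.distrib sum_distrib_left)
  have "(\<Sum>i\<in>N. a i * (\<Sum>w\<in>\<Omega>. p w * (\<Prod>k\<in>{i, j}. x w k)))
      = (\<Sum>w\<in>\<Omega>. p w * (\<Sum>i\<in>N. a i * (\<Prod>k\<in>{i, j}. x w k)))"
    by (simp add: sum_distrib_left sum.swap[of _ N] algebra_simps)
  also have "\<dots>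
      = (\<Sum>w\<in>\<Omega>. p w * (x w j * (\<Sum>i\<in>N. a i * x w i) + a j * (x w j * (1 - x w j))))"
    by (simp only: inner)
  finally show ?thesis
    by (simp add: slack_def sum_distrib_left sum_subtractf[symmetric] algebra_simps)
qed

(*
  The level-1 conditions for y_S = sum_w p_w prod_(i in S) x_w(i) and one constraint a^T x <= b.
  Linearising x_j (b - a^T x) and (1 - x_j) (b - a^T x) replaces x_j^2 by x_j, which at a
  fractional point x_w produces the correction terms with a_j.
*)
definition SA1_valid ::
  "'e set \<Rightarrow> 'w set \<Rightarrow> ('w \<Rightarrow> real) \<Rightarrow> ('w \<Rightarrow> 'e \<Rightarrow> real) \<Rightarrow> ('e \<Rightarrow> real) \<Rightarrow> real \<Rightarrow> bool" where
  "SA1_valid N \<Omega> p x a b \<longleftrightarrow>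
     0 \<le> (\<Sum>w\<in>\<Omega>. p w * slack N a b (x w)) \<and>
     (\<forall>j\<in>N. 0 \<le> (\<Sum>w\<in>\<Omega>. p w * (x w j * (slack N a b (x w) - a j * (1 - x w j)))) \<and>
             0 \<le> (\<Sum>w\<in>\<Omega>. p w * ((1 - x w j) * (slack N a b (x w) + a j * x w j))))"

lemma SA1_validI_pointwise:
  assumes "\<And>w. w \<in> \<Omega> \<Longrightarrow> 0 \<le> p w"
    and "\<And>w. w \<in> \<Omega> \<Longrightarrow> 0 \<le> slack N a b (x w)"
    and "\<And>w j. w \<in> \<Omega> \<Longrightarrow> j \<in> N \<Longrightarrow>
           0 \<le> x w j * (slack N a b (x w) - a j * (1 - x w j))"
    and "\<And>w j. w \<in> \<Omega> \<Longrightarrow> j \<in> N \<Longrightarrow>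
           0 \<le> (1 - x w j) * (slack N a b (x w) + a j * x w j)"
  shows "SA1_valid N \<Omega> p x a b"
  unfolding SA1_valid_def using assms by (auto intro!: sum_nonneg)

lemma SA1_valid_bounds:
  assumes "finite N" "\<And>w. w \<in> \<Omega> \<Longrightarrow> 0 \<le> p w"
    and x01: "\<And>w i. w \<in> \<Omega> \<Longrightarrow> i \<in> N \<Longrightarrow> 0 \<le> x w i \<and> x w i \<le> 1"
    and ab: "(a, b) \<in> with_bounds N {}"
  shows "SA1_valid N \<Omega> p x a b"
proof -
  obtain i c where i: "i \<in> N" and a: "a = (\<lambda>j. if j = i then c else 0)"
    and cb: "c = -1 \<and> b = 0 \<or> c = 1 \<and> b = 1"
    using ab unfolding with_bounds_def by blast
  have "(\<Sum>j\<in>N. a j * x w j) = (\<Sum>j\<in>N. if j = i then c * x w i else 0)" for w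
    by (rule sum.cong) (auto simp: a)
  then have "slack N a b (x w) = b - c * x w i" for w
    using \<open>finite N\<close> i by (simp add: slack_def)
  then show ?thesis
    using cb x01[OF _ i] x01 by (intro SA1_validI_pointwise assms(2)) (auto simp: a)
qed

lemma card_le_1_disjoint_cases:
  assumes "finite V0" "finite V1" "card V0 + card V1 \<le> 1"
  obtains "V0 = {}" "V1 = {}" | j where "V0 = {}" "V1 = {j}" | j where "V0 = {j}" "V1 = {}"
  using assms by (cases "card V0"; cases "card V1") (auto simp: card_1_singleton_iff)

lemma SA_feasible_1_mixture:
  fixes x :: "'w \<Rightarrow> 'e \<Rightarrow> real"
  assumes "finite N" "(\<Sum>w\<in>\<Omega>. p w) = 1" "\<And>w. w \<in> \<Omega> \<Longrightarrow> 0 \<le> p w"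
    and "\<And>w i. w \<in> \<Omega> \<Longrightarrow> i \<in> N \<Longrightarrow> 0 \<le> x w i \<and> x w i \<le> 1"
    and valid: "\<And>a b. (a, b) \<in> C \<Longrightarrow> SA1_valid N \<Omega> p x a b"
  shows "SA_feasible N C 1 (\<lambda>S. \<Sum>w\<in>\<Omega>. p w * (\<Prod>i\<in>S. x w i))"
  unfolding SA_feasible_def Ball_def split_paired_All prod.case
proof (intro conjI allI impI)
  show "(\<Sum>w\<in>\<Omega>. p w * (\<Prod>i\<in>{}. x w i)) = 1"
    using assms(2) by simp
  fix a b V0 V1
  assume ab: "(a, b) \<in> with_bounds N C"
    and V: "V0 \<subseteq> N \<and> V1 \<subseteq> N \<and> V0 \<inter> V1 = {} \<and> card V0 + card V1 \<le> 1"
  have "with_bounds N C = C \<union> with_bounds N {}"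
    unfolding with_bounds_def by blast
  then have "SA1_valid N \<Omega> p x a b"
    using ab valid SA1_valid_bounds[OF assms(1,3,4)] by auto
  then have level0: "0 \<le> (\<Sum>w\<in>\<Omega>. p w * slack N a b (x w))"
    and level1: "\<And>j. j \<in> N \<Longrightarrow>
      0 \<le> (\<Sum>w\<in>\<Omega>. p w * (x w j * (slack N a b (x w) - a j * (1 - x w j)))) \<and>
      0 \<le> (\<Sum>w\<in>\<Omega>. p w * ((1 - x w j) * (slack N a b (x w) + a j * x w j)))"
    unfolding SA1_valid_def by auto
  have fin: "finite V0" "finite V1"
    using V assms(1) finite_subset by auto
  have card: "card V0 + card V1 \<le> 1"
    using V by simp
  show "0 \<le> (\<Sum>W\<in>Pow V0. (-1) ^ card W * (b * (\<Sum>w\<in>\<Omega>. p w * (\<Prod>i\<in>V1 \<union> W. x w i))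
           - (\<Sum>i\<in>N. a i * (\<Sum>w\<in>\<Omega>. p w * (\<Prod>i\<in>V1 \<union> W \<union> {i}. x w i)))))"
    using fin card
  proof (cases rule: card_le_1_disjoint_cases)
    case 1
    then show ?thesis
      using level0 mixture_linearized_constraint[OF assms(2), of b x a N] by simp
  next
    case (2 j)
    then show ?thesis
      using V level1 mixture_linearized_product[OF assms(1), where a=a and b=b and p=p and x=x]
      by simp
  next
    case (3 j)
    then have j: "j \<in> N"
      using V by simp
    have "Pow {j} = {{}, {j}}"
      by auto
    then show ?thesis
      using 3 level1[OF j] mixture_linearized_constraint[OF assms(2), of b x a N]
        mixture_linearized_product[OF assms(1) j, where a=a and b=b and p=p and x=x]
      by (simp add: sum_subtractf[symmetric] algebra_simps)
  qed
qed

section \<open>Rows of the assignment LP and relabelled graphs\<close>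

definition source_row :: "edge set \<Rightarrow> vtx \<Rightarrow> edge \<Rightarrow> real" where
  "source_row E s e = (if e \<in> out_edges E s then -1 else 0)"

definition degree_row :: "edge set \<Rightarrow> real \<Rightarrow> vtx \<Rightarrow> edge \<Rightarrow> real" where
  "degree_row E c v e = (if e \<in> in_edges E v then c else 0) - (if e \<in> out_edges E v then 1 else 0)"

definition capacity_row :: "edge set \<Rightarrow> vtx \<Rightarrow> edge \<Rightarrow> real" where
  "capacity_row E v e = (if e \<in> in_edges E v then 1 else 0)"

lemma assignment_LP_cases:
  assumes "(a, b) \<in> assignment_LP V E s l L k'"
  obtains "a = source_row E s" "b = - k' s"
    | v where "v \<in> V - ({s} \<union> L l)" "a = degree_row E (k' v) v" "b = 0"
    | v where "v \<in> V" "a = capacity_row E v" "b = 1"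
  using assms unfolding assignment_LP_def source_row_def degree_row_def capacity_row_def
  by (auto simp: fun_eq_iff)

lemma sum_indicator_mult:
  fixes f :: "'a \<Rightarrow> real"
  assumes "finite E" "A \<subseteq> E"
  shows "(\<Sum>e\<in>E. (if e \<in> A then c else 0) * f e) = c * (\<Sum>e\<in>A. f e)"
proof -
  have "(\<Sum>e\<in>E. (if e \<in> A then c else 0) * f e) = (\<Sum>e\<in>E. of_bool (e \<in> A) * (c * f e))"
    by (intro sum.cong) auto
  also have "\<dots> = (\<Sum>e\<in>A. c * f e)"
    using assms by (simp add: Int_absorb1 Int_def[symmetric])
  finally show ?thesis
    by (simp add: sum_distrib_left)
qed

lemma out_edges_subset: "out_edges E v \<subseteq> E"
  and in_edges_subset: "in_edges E v \<subseteq> E"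
  unfolding out_edges_def in_edges_def by auto

lemma slack_source_row:
  "finite E \<Longrightarrow> slack E (source_row E s) (- c) x = (\<Sum>e\<in>out_edges E s. x e) - c"
  unfolding slack_def source_row_def by (simp add: sum_indicator_mult out_edges_subset)

lemma slack_degree_row:
  "finite E \<Longrightarrow>
     slack E (degree_row E c v) 0 x = (\<Sum>e\<in>out_edges E v. x e) - c * (\<Sum>e\<in>in_edges E v. x e)"
  unfolding slack_def degree_row_def
  by (simp add: left_diff_distrib sum_subtractf sum_indicator_mult out_edges_subset in_edges_subset)

lemma slack_capacity_row:
  "finite E \<Longrightarrow> slack E (capacity_row E v) 1 x = 1 - (\<Sum>e\<in>in_edges E v. x e)"
  unfolding slack_def capacity_row_def by (simp add: sum_indicator_mult in_edges_subset)

lemma out_edges_relabel: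
  "inj f \<Longrightarrow> out_edges (map_prod f f ` E) (f v) = map_prod f f ` {e \<in> E. fst e = v}"
  unfolding out_edges_def by (auto simp: inj_eq)

lemma in_edges_relabel:
  "inj f \<Longrightarrow> in_edges (map_prod f f ` E) (f v) = map_prod f f ` {e \<in> E. snd e = v}"
  unfolding in_edges_def by (auto simp: inj_eq)

lemma relabel_mem_out_edges:
  "inj f \<Longrightarrow> e \<in> E \<Longrightarrow> map_prod f f e \<in> out_edges (map_prod f f ` E) (f v) \<longleftrightarrow> fst e = v"
  by (cases e) (auto simp: out_edges_def inj_eq)

lemma relabel_mem_in_edges:
  "inj f \<Longrightarrow> e \<in> E \<Longrightarrow> map_prod f f e \<in> in_edges (map_prod f f ` E) (f v) \<longleftrightarrow> snd e = v"
  by (cases e) (auto simp: in_edges_def inj_eq)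

lemma inj_map_prod_same: "inj f \<Longrightarrow> inj (map_prod f f)"
  by (simp add: prod.inj_map)

lemma card_out_edges_relabel:
  "inj f \<Longrightarrow> card (out_edges (map_prod f f ` E) (f v)) = card {e \<in> E. fst e = v}"
  by (simp add: out_edges_relabel card_image inj_on_subset[OF inj_map_prod_same] subset_UNIV)

lemma card_in_edges_relabel:
  "inj f \<Longrightarrow> card (in_edges (map_prod f f ` E) (f v)) = card {e \<in> E. snd e = v}"
  by (simp add: in_edges_relabel card_image inj_on_subset[OF inj_map_prod_same] subset_UNIV)

lemma source_row_relabel:
  "inj f \<Longrightarrow> e \<in> E \<Longrightarrow>
     source_row (map_prod f f ` E) (f s) (map_prod f f e) = (if fst e = s then -1 else 0)"
  by (simp add: source_row_def relabel_mem_out_edges)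

lemma degree_row_relabel:
  "inj f \<Longrightarrow> e \<in> E \<Longrightarrow> degree_row (map_prod f f ` E) c (f v) (map_prod f f e)
     = (if snd e = v then c else 0) - (if fst e = v then 1 else 0)"
  by (simp add: degree_row_def relabel_mem_out_edges relabel_mem_in_edges)

lemma capacity_row_relabel:
  "inj f \<Longrightarrow> e \<in> E \<Longrightarrow>
     capacity_row (map_prod f f ` E) (f v) (map_prod f f e) = (if snd e = v then 1 else 0)"
  by (simp add: capacity_row_def relabel_mem_in_edges)

section \<open>The instance\<close>

datatype node =
  Root | Hub nat nat | Mid nat nat nat | Leaf nat nat nat | Shared nat nat nat | Pad nat

instance node :: countable
  by countable_datatype

definition hubs :: "nat \<Rightarrow> node set" where
  "hubs K = {Hub u j | u j. u < K \<and> j < K^2}"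

definition mids :: "nat \<Rightarrow> node set" where
  "mids K = {Mid u j l | u j l. u < K \<and> j < K^2 \<and> l < K^2}"

definition leaves :: "nat \<Rightarrow> node set" where
  "leaves K = {Leaf u j l | u j l. u < K \<and> j < K^2 \<and> l < K^2}"

definition shared :: "nat \<Rightarrow> node set" where
  "shared K = {Shared u j t | u j t. u < K \<and> j < K^2 \<and> t < K}"

definition pads :: "nat \<Rightarrow> node set" where
  "pads n = Pad ` {..<n}"

definition layer :: "nat \<Rightarrow> nat \<Rightarrow> nat \<Rightarrow> node set" where
  "layer K n i =
     (if i = 0 then {Root} else if i = 1 then hubs K else if i = 2 then mids K
      else if i = 3 then leaves K \<union> shared K \<union> pads n else {})"

definition nodes :: "nat \<Rightarrow> nat \<Rightarrow> node set" where
  "nodes K n = {Root} \<union> hubs K \<union> mids K \<union> leaves K \<union> shared K \<union> pads n"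

definition arcs :: "nat \<Rightarrow> (node \<times> node) set" where
  "arcs K = {(Root, Hub u j) | u j. u < K \<and> j < K^2}
          \<union> {(Hub u j, Mid u j l) | u j l. u < K \<and> j < K^2 \<and> l < K^2}
          \<union> {(Mid u j l, Leaf u j l) | u j l. u < K \<and> j < K^2 \<and> l < K^2}
          \<union> {(Mid u j l, Shared u j t) | u j l t. u < K \<and> j < K^2 \<and> l < K^2 \<and> t < K}"

(* The problem is stated for graphs on natural numbers; the instance is built on the datatype
   and transported along the injection to_nat. *)
abbreviation enc :: "node \<Rightarrow> nat" where
  "enc \<equiv> to_nat"

definition inst_V :: "nat \<Rightarrow> nat \<Rightarrow> vtx set" where
  "inst_V K n = enc ` nodes K n"

definition inst_E :: "nat \<Rightarrow> edge set" where
  "inst_E K = map_prod enc enc ` arcs K"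

definition inst_L :: "nat \<Rightarrow> nat \<Rightarrow> nat \<Rightarrow> vtx set" where
  "inst_L K n i = enc ` layer K n i"

lemma inj_enc: "inj enc"
  by (rule inj_to_nat)

lemma node_classes_image:
  "hubs K = case_prod Hub ` ({..<K} \<times> {..<K^2})"
  "mids K = (\<lambda>(u, j, l). Mid u j l) ` ({..<K} \<times> {..<K^2} \<times> {..<K^2})"
  "leaves K = (\<lambda>(u, j, l). Leaf u j l) ` ({..<K} \<times> {..<K^2} \<times> {..<K^2})"
  "shared K = (\<lambda>(u, j, t). Shared u j t) ` ({..<K} \<times> {..<K^2} \<times> {..<K})"
  unfolding hubs_def mids_def leaves_def shared_def by (auto simp: image_iff)

lemma finite_nodes: "finite (nodes K n)"
  unfolding nodes_def pads_def node_classes_image by simp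

lemma finite_arcs: "finite (arcs K)"
proof -
  have "arcs K \<subseteq> nodes K 0 \<times> nodes K 0"
    unfolding arcs_def nodes_def hubs_def mids_def leaves_def shared_def by auto
  then show ?thesis
    using finite_nodes finite_subset by blast
qed

lemma card_nodes:
  "n \<le> card (nodes K n)" "card (nodes K n) \<le> 1 + K^3 + 2 * K^5 + K^4 + n"
proof -
  have "card (pads n) = n"
    unfolding pads_def by (simp add: card_image inj_on_def)
  then show "n \<le> card (nodes K n)"
    using card_mono[OF finite_nodes, of "pads n"] unfolding nodes_def by auto
  have "card (nodes K n) \<le> card {Root} + card (hubs K) + card (mids K) + card (leaves K)
                             + card (shared K) + card (pads n)"
    unfolding nodes_def by (rule order_trans[OF card_Un_le] add_mono card_Un_le order_refl)+
  also have "\<dots> \<le> 1 + K^3 + 2 * K^5 + K^4 + n"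
  proof -
    have "card (hubs K) \<le> K^3" "card (mids K) \<le> K^5" "card (leaves K) \<le> K^5"
      "card (shared K) \<le> K^4"
      unfolding node_classes_image
      by (rule card_image_le[THEN order_trans], simp,
          simp add: card_cartesian_product power_numeral_reduce)+
    then show ?thesis
      using \<open>card (pads n) = n\<close> by simp
  qed
  finally show "card (nodes K n) \<le> 1 + K^3 + 2 * K^5 + K^4 + n" .
qed

lemma layered_graph_inst: "layered_graph (inst_V K n) (inst_E K) (enc Root) 3 (inst_L K n)"
proof -
  have layers: "{0..3::nat} = {0, 1, 2, 3}" "{0..<3::nat} = {0, 1, 2}"
    by auto
  have "layer K n i \<inter> layer K n i' = {}" if "i \<noteq> i'" for i i'
    using that unfolding layer_def hubs_def mids_def leaves_def shared_def pads_def by auto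
  then have "inst_L K n i \<inter> inst_L K n i' = {}" if "i \<noteq> i'" for i i'
    using that unfolding inst_L_def image_Int[OF inj_enc, symmetric] by simp
  moreover have "inst_V K n = (\<Union>i\<in>{0..3}. inst_L K n i)"
    unfolding inst_V_def inst_L_def layers layer_def nodes_def by auto
  moreover have "inst_E K \<subseteq> (\<Union>i\<in>{0..<3}. inst_L K n i \<times> inst_L K n (Suc i))"
    unfolding inst_E_def inst_L_def layers layer_def arcs_def
    unfolding hubs_def mids_def leaves_def shared_def
    by auto
  moreover have "finite (inst_V K n)" "inst_L K n 0 = {enc Root}"
    by (simp_all add: inst_V_def finite_nodes inst_L_def layer_def)
  ultimately show ?thesis
    unfolding layered_graph_def by blast
qed

lemma non_sinks_inst: "inst_V K n - inst_L K n 3 = enc ` ({Root} \<union> hubs K \<union> mids K)"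
proof -
  have "nodes K n - layer K n 3 = {Root} \<union> hubs K \<union> mids K"
    unfolding nodes_def layer_def hubs_def mids_def leaves_def shared_def pads_def by auto
  then show ?thesis
    unfolding inst_V_def inst_L_def by (simp add: image_set_diff[OF inj_enc, symmetric])
qed

lemma mmda_instance_inst:
  "0 < K \<Longrightarrow> mmda_instance (inst_V K n) (inst_E K) (enc Root) 3 (inst_L K n) (\<lambda>_. K)"
  unfolding mmda_instance_def by (simp add: layered_graph_inst)

section \<open>Integral solutions\<close>

lemma in_degree_eq_1:
  assumes "finite T" "(u, v) \<in> T" "card {e \<in> T. snd e = v} \<le> 1"
  shows "card {e \<in> T. snd e = v} = 1"
proof -
  have "card {e \<in> T. snd e = v} \<noteq> 0"
    using assms(1,2) by (auto simp: card_eq_0_iff)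
  with assms(3) show ?thesis
    by simp
qed

lemma disjoint_choices_bound:
  fixes T :: "('a \<times> 'a) set" and r :: real
  assumes "finite T" "finite C" "\<And>c. c \<in> C \<Longrightarrow> card {e \<in> T. snd e = c} \<le> 1"
    and "finite B" "r \<le> card B" "1 \<le> r"
    and choices: "\<And>b. b \<in> B \<Longrightarrow> r - 1 \<le> card {c \<in> C. (b, c) \<in> T}"
  shows "r * (r - 1) \<le> card C"
proof -
  define D where "D b = {c \<in> C. (b, c) \<in> T}" for b
  have "b = b'" if "c \<in> C" "(b, c) \<in> T" "(b', c) \<in> T" for b b' c
    using assms(1) assms(3)[OF that(1)] that(2,3) by (auto simp: card_le_Suc0_iff_eq)
  then have "(\<Sum>b\<in>B. card (D b)) = card (\<Union>b\<in>B. D b)"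
    using \<open>finite B\<close> \<open>finite C\<close>
    by (intro card_UN_disjoint[symmetric]) (auto simp: D_def)
  also have "\<dots> \<le> card C"
    using \<open>finite C\<close> by (intro card_mono) (auto simp: D_def)
  finally have sum_le: "(\<Sum>b\<in>B. card (D b)) \<le> card C" .
  have "r * (r - 1) \<le> card B * (r - 1)"
    using assms(5,6) by (intro mult_right_mono) auto
  also have "\<dots> = (\<Sum>b\<in>B. r - 1)"
    by simp
  also have "\<dots> \<le> (\<Sum>b\<in>B. real (card (D b)))"
    using choices by (intro sum_mono) (simp add: D_def)
  also have "\<dots> \<le> card C"
    using sum_le by (simp flip: of_nat_sum)
  finally show ?thesis .
qed

lemma integral_approx_inst_pullback:
  assumes "integral_approx (inst_V K n) (inst_E K) (enc Root) 3 (inst_L K n) (\<lambda>_. K) \<alpha>"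
  obtains T where "T \<subseteq> arcs K"
    and "K / \<alpha> \<le> card {e \<in> T. fst e = Root}"
    and "\<And>v. v \<in> nodes K n \<Longrightarrow> card {e \<in> T. snd e = v} \<le> 1"
    and "\<And>v. v \<in> hubs K \<union> mids K \<Longrightarrow> card {e \<in> T. snd e = v} = 1 \<Longrightarrow>
           K / \<alpha> \<le> card {e \<in> T. fst e = v}"
proof -
  obtain T' where T': "T' \<subseteq> inst_E K"
    and root: "K / \<alpha> \<le> card (out_edges T' (enc Root))"
    and indeg: "\<forall>v\<in>inst_V K n. card (in_edges T' v) \<le> 1"
    and outdeg: "\<forall>v\<in>inst_V K n - inst_L K n 3 - {enc Root}.
                   card (in_edges T' v) = 1 \<longrightarrow> K / \<alpha> \<le> card (out_edges T' v)"
    using assms unfolding integral_approx_def by blast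
  define T where "T = {e \<in> arcs K. map_prod enc enc e \<in> T'}"
  have T'_eq: "T' = map_prod enc enc ` T"
  proof (intro equalityI subsetI)
    fix e assume "e \<in> T'"
    with T' obtain e0 where "e0 \<in> arcs K" "e = map_prod enc enc e0"
      unfolding inst_E_def by auto
    with \<open>e \<in> T'\<close> show "e \<in> map_prod enc enc ` T"
      unfolding T_def by (intro image_eqI) auto
  qed (auto simp: T_def)
  show thesis
  proof
    show "T \<subseteq> arcs K"
      unfolding T_def by auto
    show "K / \<alpha> \<le> card {e \<in> T. fst e = Root}"
      using root by (simp add: T'_eq card_out_edges_relabel[OF inj_enc])
    show "card {e \<in> T. snd e = v} \<le> 1" if "v \<in> nodes K n" for v
      using indeg that by (simp add: T'_eq card_in_edges_relabel[OF inj_enc] inst_V_def)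
    show "K / \<alpha> \<le> card {e \<in> T. fst e = v}"
      if "v \<in> hubs K \<union> mids K" "card {e \<in> T. snd e = v} = 1" for v
    proof -
      have "v \<noteq> Root"
        using that(1) unfolding hubs_def mids_def by auto
      then have "enc v \<in> inst_V K n - inst_L K n 3 - {enc Root}"
        using that(1) unfolding non_sinks_inst by (simp add: inj_eq[OF inj_enc])
      from outdeg[rule_format, OF this] show ?thesis
        using that(2)
        by (simp add: T'_eq card_out_edges_relabel[OF inj_enc] card_in_edges_relabel[OF inj_enc])
    qed
  qed
qed

lemma out_degree_Mid:
  assumes "T \<subseteq> arcs K"
  shows "card {e \<in> T. fst e = Mid u j l}
           \<le> Suc (card {c \<in> Shared u j ` {..<K}. (Mid u j l, c) \<in> T})"
proof -
  let ?D = "{c \<in> Shared u j ` {..<K}. (Mid u j l, c) \<in> T}"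
  have "card {e \<in> T. fst e = Mid u j l}
      \<le> card (insert (Mid u j l, Leaf u j l) (Pair (Mid u j l) ` ?D))"
    using assms unfolding arcs_def by (intro card_mono) auto
  also have "\<dots> \<le> Suc (card ?D)"
    using card_image_le[of ?D "Pair (Mid u j l)"] by (simp add: card_insert_if)
  finally show ?thesis .
qed

lemma integral_solution_bound:
  fixes T :: "(node \<times> node) set" and r :: real
  assumes T: "T \<subseteq> arcs K" and "1 \<le> r"
    and root: "r \<le> card {e \<in> T. fst e = Root}"
    and indeg: "\<And>v. v \<in> nodes K n \<Longrightarrow> card {e \<in> T. snd e = v} \<le> 1"
    and outdeg: "\<And>v. v \<in> hubs K \<union> mids K \<Longrightarrow> card {e \<in> T. snd e = v} = 1 \<Longrightarrow>
                   r \<le> card {e \<in> T. fst e = v}"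
  shows "r * (r - 1) \<le> K"
proof -
  have "finite T"
    using T finite_arcs finite_subset by blast
  have entered: "card {e \<in> T. snd e = v} = 1" if "(u, v) \<in> T" "v \<in> nodes K n" for u v
    using in_degree_eq_1[OF \<open>finite T\<close> that(1) indeg[OF that(2)]] .
  have "card {e \<in> T. fst e = Root} \<noteq> 0"
    using root \<open>1 \<le> r\<close> by auto
  then have "{e \<in> T. fst e = Root} \<noteq> {}"
    by (metis card.empty)
  then obtain uu jj where hub_arc: "(Root, Hub uu jj) \<in> T" and "uu < K" "jj < K^2"
    using T unfolding arcs_def by auto
  define hub where "hub = Hub uu jj"
  define B where "B = snd ` {e \<in> T. fst e = hub}"
  define C where "C = Shared uu jj ` {..<K}"
  have "finite B" "finite C"
    unfolding B_def C_def using \<open>finite T\<close> by simp_all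
  have hub_nodes: "hub \<in> hubs K" "hub \<in> nodes K n"
    using \<open>uu < K\<close> \<open>jj < K^2\<close> unfolding hub_def hubs_def nodes_def by auto
  have "card B = card {e \<in> T. fst e = hub}"
    unfolding B_def by (intro card_image) (auto simp: inj_on_def prod_eq_iff)
  then have card_B: "r \<le> card B"
    using outdeg[of hub] entered[OF hub_arc[folded hub_def] hub_nodes(2)] hub_nodes(1) by simp
  have choices: "r - 1 \<le> card {c \<in> C. (b, c) \<in> T}" if "b \<in> B" for b
  proof -
    obtain l where l: "l < K^2" "b = Mid uu jj l" "(hub, b) \<in> T"
      using \<open>b \<in> B\<close> T unfolding B_def hub_def arcs_def by auto
    then have "b \<in> mids K" "b \<in> nodes K n"
      using \<open>uu < K\<close> \<open>jj < K^2\<close> unfolding mids_def nodes_def by auto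
    then have "r \<le> card {e \<in> T. fst e = b}"
      using outdeg entered[OF l(3)] by simp
    moreover have "real (card {e \<in> T. fst e = b}) \<le> card {c \<in> C. (b, c) \<in> T} + 1"
      using out_degree_Mid[OF T, of uu jj l] unfolding C_def l(2) by simp
    ultimately show ?thesis
      by simp
  qed
  have "C \<subseteq> nodes K n"
    using \<open>uu < K\<close> \<open>jj < K^2\<close> unfolding C_def nodes_def shared_def by auto
  have "r * (r - 1) \<le> card C"
    using \<open>C \<subseteq> nodes K n\<close> indeg \<open>finite B\<close> card_B \<open>1 \<le> r\<close> choices
    by (intro disjoint_choices_bound[OF \<open>finite T\<close> \<open>finite C\<close>]) auto
  also have "card C \<le> K"
    unfolding C_def using card_image_le[of "{..<K}" "Shared uu jj"] by simp
  finally show ?thesis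
    by simp
qed

lemma integral_approx_inst_lower_bound:
  assumes "1 \<le> K" "1 \<le> \<alpha>"
    and "integral_approx (inst_V K n) (inst_E K) (enc Root) 3 (inst_L K n) (\<lambda>_. K) \<alpha>"
  shows "K / 4 \<le> \<alpha>^2"
proof -
  define r where "r = K / \<alpha>"
  have "0 < r"
    using assms(1,2) by (simp add: r_def)
  have "r^2 \<le> 4 * K"
  proof (cases "2 \<le> r")
    case True
    obtain T where "T \<subseteq> arcs K" "r \<le> card {e \<in> T. fst e = Root}"
      "\<And>v. v \<in> nodes K n \<Longrightarrow> card {e \<in> T. snd e = v} \<le> 1"
      "\<And>v. v \<in> hubs K \<union> mids K \<Longrightarrow> card {e \<in> T. snd e = v} = 1 \<Longrightarrow> r \<le> card {e \<in> T. fst e = v}"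
      using integral_approx_inst_pullback[OF assms(3), folded r_def] by blast
    then have "r * (r - 1) \<le> K"
      using True by (intro integral_solution_bound) auto
    moreover have "r^2 \<le> 2 * (r * (r - 1))"
      using True by (simp add: power2_eq_square algebra_simps)
    ultimately show ?thesis
      by linarith
  next
    case False
    then have "r^2 \<le> 2^2"
      using \<open>0 < r\<close> by (intro power_mono) auto
    then show ?thesis
      using assms(1) by simp
  qed
  then have "K^2 / \<alpha>^2 \<le> 4 * K"
    by (simp add: r_def power_divide)
  then show ?thesis
    using assms(1,2) by (simp add: field_simps power2_eq_square)
qed

section \<open>A level-1 solution\<close>

fun scenario :: "nat \<Rightarrow> nat \<Rightarrow> node \<times> node \<Rightarrow> real" where
  "scenario K w (Root, Hub u j) = (if j = w then 1 else 0)"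
| "scenario K w (Hub u j, Mid u' j' l) = (if l = w then 1 else if j = w then 1 / K else 0)"
| "scenario K w (Mid u j l, Leaf u' j' l') = (if l = w \<or> j = w then 1 else 0)"
| "scenario K w (Mid u j l, Shared u' j' t) = (if l = w then 1 else 0)"
| "scenario K w _ = 0"

definition outflow :: "nat \<Rightarrow> nat \<Rightarrow> node \<Rightarrow> real" where
  "outflow K w v = (\<Sum>e\<in>{e \<in> arcs K. fst e = v}. scenario K w e)"

definition inflow :: "nat \<Rightarrow> nat \<Rightarrow> node \<Rightarrow> real" where
  "inflow K w v = (\<Sum>e\<in>{e \<in> arcs K. snd e = v}. scenario K w e)"

lemma sum_if_eq:
  fixes a b :: real
  assumes "w < m"
  shows "(\<Sum>l<m. if l = w then a else b) = a + (real m - 1) * b"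
proof -
  have "(\<Sum>l<m. if l = w then a else b) = (\<Sum>l<m. b + (if l = w then a - b else 0))"
    by (intro sum.cong) auto
  also have "\<dots> = real m * b + (a - b)"
    using assms by (simp add: sum.distrib)
  finally show ?thesis
    by (simp add: algebra_simps)
qed

lemma outflow_Root: "w < K^2 \<Longrightarrow> outflow K w Root = K"
proof -
  assume "w < K^2"
  have out: "{e \<in> arcs K. fst e = Root} = (\<lambda>(u, j). (Root, Hub u j)) ` ({..<K} \<times> {..<K^2})"
    unfolding arcs_def by auto
  have "outflow K w Root = (\<Sum>(u, j)\<in>{..<K} \<times> {..<K^2}. scenario K w (Root, Hub u j))"
    unfolding outflow_def out by (subst sum.reindex) (auto simp: inj_on_def case_prod_beta)
  also have "\<dots> = (\<Sum>u<K. \<Sum>j<K^2. if j = w then 1 else 0)"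
    by (simp add: sum.cartesian_product[symmetric])
  finally show ?thesis
    using \<open>w < K^2\<close> by simp
qed

lemma outflow_Hub:
  assumes "u < K" "j < K^2" "w < K^2"
  shows "outflow K w (Hub u j) = 1 + (if j = w then (real (K^2) - 1) / K else 0)"
proof -
  have "{e \<in> arcs K. fst e = Hub u j} = (\<lambda>l. (Hub u j, Mid u j l)) ` {..<K^2}"
    using assms unfolding arcs_def by auto
  then have "outflow K w (Hub u j) = (\<Sum>l<K^2. if l = w then 1 else if j = w then 1 / K else 0)"
    unfolding outflow_def by (simp add: sum.reindex inj_on_def)
  then show ?thesis
    using sum_if_eq[OF \<open>w < K^2\<close>, of 1 "if j = w then 1 / K else 0"] by simp
qed

lemma inflow_Hub: "u < K \<Longrightarrow> j < K^2 \<Longrightarrow> inflow K w (Hub u j) = (if j = w then 1 else 0)"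
proof -
  assume "u < K" "j < K^2"
  then have "{e \<in> arcs K. snd e = Hub u j} = {(Root, Hub u j)}"
    unfolding arcs_def by auto
  then show ?thesis
    unfolding inflow_def by simp
qed

lemma outflow_Mid:
  assumes "u < K" "j < K^2" "l < K^2"
  shows "outflow K w (Mid u j l) = (if l = w \<or> j = w then 1 else 0) + (if l = w then real K else 0)"
proof -
  have out: "{e \<in> arcs K. fst e = Mid u j l}
      = insert (Mid u j l, Leaf u j l) ((\<lambda>t. (Mid u j l, Shared u j t)) ` {..<K})"
    using assms unfolding arcs_def by auto
  show ?thesis
    unfolding outflow_def out by (subst sum.insert) (auto simp: sum.reindex inj_on_def)
qed

lemma inflow_Mid:
  assumes "u < K" "j < K^2" "l < K^2"
  shows "inflow K w (Mid u j l) = (if l = w then 1 else if j = w then 1 / K else 0)"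
proof -
  have "{e \<in> arcs K. snd e = Mid u j l} = {(Hub u j, Mid u j l)}"
    using assms unfolding arcs_def by auto
  then show ?thesis
    unfolding inflow_def by simp
qed

lemma inflow_le_1:
  assumes "v \<in> nodes K n" "w < K^2" "1 \<le> K"
  shows "inflow K w v \<le> 1"
  using assms(1) unfolding nodes_def
proof (elim UnE)
  assume "v \<in> {Root}"
  then have none: "{e \<in> arcs K. snd e = v} = {}"
    unfolding arcs_def by auto
  show ?thesis
    unfolding inflow_def none by simp
next
  assume "v \<in> pads n"
  then have none: "{e \<in> arcs K. snd e = v} = {}"
    unfolding arcs_def pads_def by auto
  show ?thesis
    unfolding inflow_def none by simp
next
  assume "v \<in> hubs K"
  then show ?thesis
    unfolding hubs_def by (auto simp: inflow_Hub)
next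
  assume "v \<in> mids K"
  then show ?thesis
    using \<open>1 \<le> K\<close> unfolding mids_def by (auto simp: inflow_Mid)
next
  assume "v \<in> leaves K"
  then obtain u j l where "v = Leaf u j l" "u < K" "j < K^2" "l < K^2"
    unfolding leaves_def by auto
  then have "{e \<in> arcs K. snd e = v} = {(Mid u j l, Leaf u j l)}"
    unfolding arcs_def by auto
  then show ?thesis
    unfolding inflow_def by simp
next
  assume "v \<in> shared K"
  then obtain u j t where "v = Shared u j t" "u < K" "j < K^2" "t < K"
    unfolding shared_def by auto
  then have "{e \<in> arcs K. snd e = v} = (\<lambda>l. (Mid u j l, Shared u j t)) ` {..<K^2}"
    unfolding arcs_def by auto
  then show ?thesis
    unfolding inflow_def using \<open>w < K^2\<close> by (simp add: sum.reindex inj_on_def)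
qed

definition scenario_point :: "nat \<Rightarrow> nat \<Rightarrow> edge \<Rightarrow> real" where
  "scenario_point K w e = scenario K w (map_prod from_nat from_nat e)"

lemma scenario_point_enc [simp]: "scenario_point K w (map_prod enc enc e) = scenario K w e"
  by (cases e) (simp add: scenario_point_def)

lemma finite_inst_E: "finite (inst_E K)"
  unfolding inst_E_def using finite_arcs by simp

lemma sum_out_edges_inst: "(\<Sum>e\<in>out_edges (inst_E K) (enc v). scenario_point K w e) = outflow K w v"
  unfolding inst_E_def outflow_def out_edges_relabel[OF inj_enc]
  by (subst sum.reindex) (auto intro: inj_on_subset[OF inj_map_prod_same[OF inj_enc]])

lemma sum_in_edges_inst: "(\<Sum>e\<in>in_edges (inst_E K) (enc v). scenario_point K w e) = inflow K w v"
  unfolding inst_E_def inflow_def in_edges_relabel[OF inj_enc]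
  by (subst sum.reindex) (auto intro: inj_on_subset[OF inj_map_prod_same[OF inj_enc]])

abbreviation inst_LP :: "nat \<Rightarrow> nat \<Rightarrow> edge lin_constr set" where
  "inst_LP K n \<equiv> assignment_LP (inst_V K n) (inst_E K) (enc Root) 3 (inst_L K n) (\<lambda>_. real K)"

lemma inst_LP_cases:
  assumes "(a, b) \<in> inst_LP K n"
  obtains "a = source_row (inst_E K) (enc Root)"
      "\<And>w. slack (inst_E K) a b (scenario_point K w) = outflow K w Root - K"
    | v where "v \<in> hubs K \<union> mids K" "a = degree_row (inst_E K) K (enc v)"
      "\<And>w. slack (inst_E K) a b (scenario_point K w) = outflow K w v - K * inflow K w v"
    | v where "v \<in> nodes K n" "a = capacity_row (inst_E K) (enc v)"
      "\<And>w. slack (inst_E K) a b (scenario_point K w) = 1 - inflow K w v"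
proof -
  have inner: "inst_V K n - ({enc Root} \<union> inst_L K n 3) = enc ` (hubs K \<union> mids K)"
  proof -
    have "Root \<notin> hubs K \<union> mids K"
      unfolding hubs_def mids_def by auto
    then show ?thesis
      using non_sinks_inst[of K n] by (auto simp: inj_eq[OF inj_enc])
  qed
  from assms show thesis
  proof (cases rule: assignment_LP_cases)
    case 1
    then show thesis
      using that(1) by (simp add: slack_source_row finite_inst_E sum_out_edges_inst)
  next
    case (2 v)
    then obtain v' where "v' \<in> hubs K \<union> mids K" "v = enc v'"
      unfolding inner by blast
    then show thesis
      using that(2) 2
      by (simp add: slack_degree_row finite_inst_E sum_out_edges_inst sum_in_edges_inst)
  next
    case (3 v)
    then obtain v' where "v' \<in> nodes K n" "v = enc v'"
      unfolding inst_V_def by blast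
    then show thesis
      using that(3) 3 by (simp add: slack_capacity_row finite_inst_E sum_in_edges_inst)
  qed
qed

lemma hub_slack:
  "u < K \<Longrightarrow> w < K^2 \<Longrightarrow> 1 \<le> K \<Longrightarrow> outflow K w (Hub u w) - K * inflow K w (Hub u w) = 1 - 1 / K"
  by (simp add: outflow_Hub inflow_Hub power2_eq_square field_simps)

lemma degree_slack_nonneg:
  assumes "v \<in> hubs K \<union> mids K" "w < K^2" "1 \<le> K"
  shows "0 \<le> outflow K w v - K * inflow K w v"
  using assms unfolding hubs_def mids_def
  by (auto simp: outflow_Hub inflow_Hub outflow_Mid inflow_Mid field_simps power2_eq_square)

lemma scenario_slack_nonneg:
  assumes "(a, b) \<in> inst_LP K n" "w < K^2" "1 \<le> K"
  shows "0 \<le> slack (inst_E K) a b (scenario_point K w)"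
  using assms(1)
proof (cases rule: inst_LP_cases)
  case 1
  then show ?thesis
    using assms(2) by (simp add: outflow_Root)
next
  case (2 v)
  then show ?thesis
    using degree_slack_nonneg assms(2,3) by simp
next
  case (3 v)
  then show ?thesis
    using inflow_le_1 assms(2,3) by simp
qed

lemma level1_terms_nonneg_01:
  fixes x g a :: real
  assumes "x = 0 \<or> x = 1" "0 \<le> g"
  shows "0 \<le> x * (g - a * (1 - x))" "0 \<le> (1 - x) * (g + a * x)"
  using assms by auto

lemma level1_lower_term_nonneg:
  fixes x g a :: real
  assumes "0 \<le> x" "x \<le> 1" "0 \<le> g" "a \<le> 0"
  shows "0 \<le> x * (g - a * (1 - x))"
proof -
  have "a * (1 - x) \<le> 0"
    using assms by (simp add: mult_nonpos_nonneg)
  then show ?thesis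
    using assms by simp
qed

lemma level1_upper_term_nonneg:
  fixes x g a :: real
  assumes "0 \<le> x" "x \<le> 1" "0 \<le> g" "0 \<le> a"
  shows "0 \<le> (1 - x) * (g + a * x)"
  using assms by simp

lemma scenario_bounds: "1 \<le> K \<Longrightarrow> 0 \<le> scenario K w e \<and> scenario K w e \<le> 1"
  by (cases "(K, w, e)" rule: scenario.cases) auto

lemma scenario_fractional:
  assumes "e \<in> arcs K" "scenario K w e \<noteq> 0" "scenario K w e \<noteq> 1"
  obtains u l where "e = (Hub u w, Mid u w l)" "u < K" "l < K^2" "l \<noteq> w" "scenario K w e = 1 / K"
  using assms unfolding arcs_def by (auto split: if_split_asm)

lemma inst_rows:
  assumes "e \<in> arcs K"
  shows "source_row (inst_E K) (enc Root) (map_prod enc enc e) = (if fst e = Root then -1 else 0)"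
    and "degree_row (inst_E K) c (enc v) (map_prod enc enc e)
           = (if snd e = v then c else 0) - (if fst e = v then 1 else 0)"
    and "capacity_row (inst_E K) (enc v) (map_prod enc enc e) = (if snd e = v then 1 else 0)"
  using assms unfolding inst_E_def
  by (simp_all add: source_row_relabel degree_row_relabel capacity_row_relabel inj_enc)

lemma scenario_level1_upper:
  assumes ab: "(a, b) \<in> inst_LP K n" and "e \<in> arcs K" "w < K^2" "2 \<le> K"
  shows "0 \<le> (1 - scenario K w e) *
                 (slack (inst_E K) a b (scenario_point K w) + a (map_prod enc enc e) * scenario K w e)"
proof -
  let ?x = "scenario K w e" and ?g = "slack (inst_E K) a b (scenario_point K w)"
  have g: "0 \<le> ?g" and x: "0 \<le> ?x" "?x \<le> 1"
    using scenario_slack_nonneg[OF ab \<open>w < K^2\<close>] scenario_bounds[of K w e] \<open>2 \<le> K\<close> by auto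
  show ?thesis
  proof (cases "?x = 0 \<or> ?x = 1")
    case True
    then show ?thesis using level1_terms_nonneg_01(2)[OF True g] by simp
  next
    case False
    then obtain u l where e: "e = (Hub u w, Mid u w l)" "u < K" "l < K^2" "?x = 1 / K"
      using scenario_fractional[OF \<open>e \<in> arcs K\<close>] by blast
    from ab show ?thesis
    proof (cases rule: inst_LP_cases)
      case 1
      then have "a (map_prod enc enc e) = 0"
        using inst_rows(1)[OF \<open>e \<in> arcs K\<close>] e(1) by simp
      then show ?thesis
        by (intro level1_upper_term_nonneg x g) simp
    next
      case (2 v)
      then have row: "a (map_prod enc enc e)
          = (if Mid u w l = v then real K else 0) - (if Hub u w = v then 1 else 0)"
        using inst_rows(2)[OF \<open>e \<in> arcs K\<close>] e(1) by simp
      show ?thesis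
      proof (cases "v = Hub u w")
        case True
        then have "?g + a (map_prod enc enc e) * ?x = 1 - 2 / K"
          using 2 row e \<open>w < K^2\<close> \<open>2 \<le> K\<close> by (simp add: hub_slack)
        moreover have "0 \<le> 1 - 2 / real K"
          using \<open>2 \<le> K\<close> by (simp add: field_simps)
        ultimately show ?thesis
          using x by simp
      next
        case False
        then show ?thesis
          using row by (intro level1_upper_term_nonneg x g) simp
      qed
    next
      case (3 v)
      then have "a (map_prod enc enc e) = (if Mid u w l = v then 1 else 0)"
        using inst_rows(3)[OF \<open>e \<in> arcs K\<close>] e(1) by simp
      then show ?thesis
        by (intro level1_upper_term_nonneg x g) simp
    qed
  qed
qed

lemma mid_in_arc_average:
  assumes "u < K" "jj < K^2" "l < K^2" "2 \<le> K"
  defines "x \<equiv> \<lambda>w. scenario K w (Hub u jj, Mid u jj l)"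
  shows "0 \<le> (\<Sum>w<K^2. 1 / real (K^2) *
            (x w * ((outflow K w (Mid u jj l) - K * inflow K w (Mid u jj l)) - K * (1 - x w))))"
proof -
  have "real K \<noteq> 0"
    using assms by simp
  then have "x w * ((outflow K w (Mid u jj l) - K * inflow K w (Mid u jj l)) - K * (1 - x w))
      = (if w = l then 1 else 0) + (if jj \<noteq> l then (if w = jj then (1 - real K) / K else 0) else 0)"
    for w
    using assms
    by (cases "w = l"; cases "w = jj") (simp_all add: x_def outflow_Mid inflow_Mid field_simps)
  then have "(\<Sum>w<K^2.
               x w * ((outflow K w (Mid u jj l) - K * inflow K w (Mid u jj l)) - K * (1 - x w)))
      = 1 + (if jj \<noteq> l then (1 - real K) / K else 0)"
    using assms by (simp add: sum.distrib)
  moreover have "0 \<le> 1 + (if jj \<noteq> l then (1 - real K) / K else 0)"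
    using assms by (simp add: field_simps)
  ultimately show ?thesis
    by (simp only: sum_distrib_left[symmetric]) simp
qed

definition lower_term :: "nat \<Rightarrow> (edge \<Rightarrow> real) \<Rightarrow> real \<Rightarrow> node \<times> node \<Rightarrow> nat \<Rightarrow> real" where
  "lower_term K a b e w = scenario K w e *
     (slack (inst_E K) a b (scenario_point K w) - a (map_prod enc enc e) * (1 - scenario K w e))"

lemma lower_term_nonneg:
  assumes ab: "(a, b) \<in> inst_LP K n" and "w < K^2" "2 \<le> K"
    and "scenario K w e = 0 \<or> scenario K w e = 1 \<or> a (map_prod enc enc e) \<le> 0"
  shows "0 \<le> lower_term K a b e w"
proof -
  have "0 \<le> slack (inst_E K) a b (scenario_point K w)" "0 \<le> scenario K w e" "scenario K w e \<le> 1"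
    using scenario_slack_nonneg[OF ab \<open>w < K^2\<close>] scenario_bounds[of K w e] \<open>2 \<le> K\<close> by auto
  then show ?thesis
    unfolding lower_term_def using assms(4) level1_terms_nonneg_01(1) level1_lower_term_nonneg
    by blast
qed

lemma lower_term_nonneg_capacity:
  assumes ab: "(a, b) \<in> inst_LP K n" and "e \<in> arcs K" "w < K^2" "2 \<le> K"
    and a: "a = capacity_row (inst_E K) (enc v)"
    and slack: "slack (inst_E K) a b (scenario_point K w) = 1 - inflow K w v"
  shows "0 \<le> lower_term K a b e w"
proof -
  have row: "a (map_prod enc enc e) = (if snd e = v then 1 else 0)"
    using inst_rows(3)[OF \<open>e \<in> arcs K\<close>] a by simp
  show ?thesis
  proof (cases "scenario K w e = 0 \<or> scenario K w e = 1 \<or> v \<noteq> snd e")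
    case True
    then show ?thesis
      using row by (intro lower_term_nonneg[OF ab \<open>w < K^2\<close> \<open>2 \<le> K\<close>]) auto
  next
    case False
    then obtain u l where e: "e = (Hub u w, Mid u w l)" "u < K" "l < K^2" "scenario K w e = 1 / K"
      using scenario_fractional[OF \<open>e \<in> arcs K\<close>] by blast
    with False have "slack (inst_E K) a b (scenario_point K w) = 1 - 1 / K"
      using slack \<open>w < K^2\<close> by (simp add: inflow_Mid)
    then show ?thesis
      using row False e by (simp add: lower_term_def)
  qed
qed

lemma scenario_level1_lower:
  assumes ab: "(a, b) \<in> inst_LP K n" and "e \<in> arcs K" "2 \<le> K"
  shows "0 \<le> (\<Sum>w<K^2. 1 / real (K^2) * lower_term K a b e w)"
proof -
  have pointwise: "0 \<le> (\<Sum>w<K^2. 1 / real (K^2) * lower_term K a b e w)"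
    if "\<And>w. w < K^2 \<Longrightarrow> 0 \<le> lower_term K a b e w"
    using that by (intro sum_nonneg mult_nonneg_nonneg) auto
  from ab show ?thesis
  proof (cases rule: inst_LP_cases)
    case 1
    then show ?thesis
      using inst_rows(1)[OF \<open>e \<in> arcs K\<close>]
      by (intro pointwise lower_term_nonneg[OF ab _ \<open>2 \<le> K\<close>]) simp_all
  next
    case (2 v)
    then have row: "a (map_prod enc enc e)
        = (if snd e = v then real K else 0) - (if fst e = v then 1 else 0)"
      using inst_rows(2)[OF \<open>e \<in> arcs K\<close>] by simp
    show ?thesis
    proof (cases "snd e = v")
      case True
      with \<open>e \<in> arcs K\<close> \<open>v \<in> hubs K \<union> mids K\<close>
      consider u j where "e = (Root, Hub u j)"
        | u jj l where "e = (Hub u jj, Mid u jj l)" "u < K" "jj < K^2" "l < K^2"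
        unfolding arcs_def hubs_def mids_def by auto
      then show ?thesis
      proof cases
        case 1
        then show ?thesis
          by (intro pointwise lower_term_nonneg[OF ab _ \<open>2 \<le> K\<close>]) simp_all
      next
        case (2 u jj l)
        with row True have "a (map_prod enc enc e) = real K" "v = Mid u jj l"
          by auto
        then show ?thesis
          using mid_in_arc_average[OF 2(2-4) \<open>2 \<le> K\<close>] 2(1)
            \<open>\<And>w. slack (inst_E K) a b (scenario_point K w) = outflow K w v - K * inflow K w v\<close>
          by (simp add: lower_term_def)
      qed
    next
      case False
      then show ?thesis
        using row by (intro pointwise lower_term_nonneg[OF ab _ \<open>2 \<le> K\<close>]) simp_all
    qed
  next
    case (3 v)
    then show ?thesis
      by (intro pointwise lower_term_nonneg_capacity[OF ab \<open>e \<in> arcs K\<close> _ \<open>2 \<le> K\<close>]) simp_all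
  qed
qed

lemma SA_feasible_inst:
  assumes "2 \<le> K"
  shows "SA_feasible (inst_E K) (inst_LP K n) 1
           (\<lambda>S. \<Sum>w<K^2. 1 / real (K^2) * (\<Prod>i\<in>S. scenario_point K w i))"
proof (rule SA_feasible_1_mixture[OF finite_inst_E])
  show "(\<Sum>w<K^2. 1 / real (K^2)) = 1"
    using assms by simp
  show "0 \<le> 1 / real (K^2)"
    by simp
  show "0 \<le> scenario_point K w i \<and> scenario_point K w i \<le> 1" for w i
    unfolding scenario_point_def using scenario_bounds assms by simp
  fix a b assume ab: "(a, b) \<in> inst_LP K n"
  show "SA1_valid (inst_E K) {..<K^2} (\<lambda>_. 1 / real (K^2)) (scenario_point K) a b"
    unfolding SA1_valid_def
  proof (intro conjI ballI)
    show "0 \<le> (\<Sum>w<K^2. 1 / real (K^2) * slack (inst_E K) a b (scenario_point K w))"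
      using scenario_slack_nonneg[OF ab] assms by (intro sum_nonneg mult_nonneg_nonneg) auto
    fix j assume "j \<in> inst_E K"
    then obtain e where "e \<in> arcs K" "j = map_prod enc enc e"
      unfolding inst_E_def by (rule imageE)
    note e = this
    show "0 \<le> (\<Sum>w<K^2. 1 / real (K^2) * (scenario_point K w j *
                  (slack (inst_E K) a b (scenario_point K w) - a j * (1 - scenario_point K w j))))"
      using scenario_level1_lower[OF ab e(1) assms] by (simp add: e(2) lower_term_def)
    show "0 \<le> (\<Sum>w<K^2. 1 / real (K^2) * ((1 - scenario_point K w j) *
                  (slack (inst_E K) a b (scenario_point K w) + a j * scenario_point K w j)))"
      using scenario_level1_upper[OF ab e(1) _ assms]
      by (intro sum_nonneg mult_nonneg_nonneg[of "1 / real (K^2)"]) (auto simp: e(2))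
  qed
qed

section \<open>The instance for a given n\<close>

lemma fifth_root_parameter:
  fixes n :: nat
  assumes "1024 \<le> n"
  obtains K :: nat where "2 \<le> K" "n powr (1/5) / 4 \<le> K" "32 * K^5 \<le> n"
proof
  define x where "x = n powr (1/5)"
  have "x^5 = n"
    using assms by (simp add: x_def powr_power)
  moreover have "0 \<le> x"
    by (simp add: x_def)
  moreover have "4^5 \<le> x^5"
    using \<open>x^5 = n\<close> assms by simp
  ultimately have "4 \<le> x"
    using power_le_imp_le_base[of 4 4 x] by simp
  show "2 \<le> nat \<lfloor>x / 2\<rfloor>" "x / 4 \<le> nat \<lfloor>x / 2\<rfloor>"
    using \<open>4 \<le> x\<close> by linarith+
  have "real (nat \<lfloor>x / 2\<rfloor>) ^ 5 \<le> (x / 2) ^ 5"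
    using \<open>4 \<le> x\<close> by (intro power_mono) linarith+
  then have "real (32 * nat \<lfloor>x / 2\<rfloor> ^ 5) \<le> real n"
    using \<open>x^5 = n\<close> by (simp add: power_divide)
  then show "32 * nat \<lfloor>x / 2\<rfloor> ^ 5 \<le> n"
    by (simp only: of_nat_le_iff)
qed

lemma card_inst_V:
  assumes "1 \<le> K" "32 * K^5 \<le> n"
  shows "n \<le> card (inst_V K n)" "card (inst_V K n) \<le> 2 * n"
proof -
  have card_eq: "card (inst_V K n) = card (nodes K n)"
    unfolding inst_V_def by (simp add: card_image inj_on_subset[OF inj_enc])
  then show "n \<le> card (inst_V K n)"
    using card_nodes(1) by simp
  have "1 + K^3 + 2 * K^5 + K^4 \<le> 32 * K^5"
    using assms(1) power_increasing[of 3 5 K] power_increasing[of 4 5 K] one_le_power[of K 5]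
    by linarith
  then show "card (inst_V K n) \<le> 2 * n"
    using card_nodes(2)[of K n] assms(2) unfolding card_eq by linarith
qed

lemma integrality_gap_inst:
  assumes "2 \<le> K" "n powr (1/5) / 4 \<le> K" "1 \<le> \<alpha>"
    and "integral_approx (inst_V K n) (inst_E K) (enc Root) 3 (inst_L K n) (\<lambda>_. K) \<alpha>"
  shows "n powr (1/10) / 4 \<le> \<alpha>"
proof (rule power2_le_imp_le)
  have "(n powr (1/10))^2 = n powr (1/5)"
    by (cases "n = 0") (simp_all add: powr_power)
  then have "(n powr (1/10) / 4)^2 = n powr (1/5) / 16"
    by (simp add: power_divide)
  moreover have "K / 4 \<le> \<alpha>^2"
    using integral_approx_inst_lower_bound assms by simp
  ultimately show "(n powr (1/10) / 4)^2 \<le> \<alpha>^2"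
    using assms(2) by linarith
  show "0 \<le> \<alpha>"
    using assms(3) by simp
qed

lemma gap_instance:
  fixes n :: nat
  assumes "1024 \<le> n"
  shows "\<exists>V E s L k. mmda_instance V E s 3 L k \<and>
       1 * real n \<le> real (card V) \<and> real (card V) \<le> 2 * real n \<and>
       (\<forall>u \<in> V - L 3. real (k u) \<ge> 1/4 * real n powr (1/5)) \<and>
       (\<exists>\<beta> \<ge> 1. SA_assign_feasible 1 V E s 3 L k \<beta> \<and>
          (\<forall>\<alpha> \<ge> 1. integral_approx V E s 3 L k \<alpha> \<longrightarrow> \<alpha> \<ge> 1/4 * real n powr (1/10) * \<beta>))"
proof -
  obtain K where K: "2 \<le> K" "n powr (1/5) / 4 \<le> K" "32 * K^5 \<le> n"
    using fifth_root_parameter[OF assms] .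
  have card: "n \<le> card (inst_V K n)" "card (inst_V K n) \<le> 2 * n"
    using K card_inst_V[of K n] by simp_all
  show ?thesis
  proof (intro exI conjI ballI)
    show "mmda_instance (inst_V K n) (inst_E K) (enc Root) 3 (inst_L K n) (\<lambda>_. K)"
      using K by (intro mmda_instance_inst) simp
    show "1 * real n \<le> real (card (inst_V K n))" "real (card (inst_V K n)) \<le> 2 * real n"
      using card by simp_all
    show "1/4 * real n powr (1/5) \<le> real K"
      using K(2) by simp
    show "(1::real) \<le> 1"
      by simp
    show "SA_assign_feasible 1 (inst_V K n) (inst_E K) (enc Root) 3 (inst_L K n) (\<lambda>_. K) 1"
      unfolding SA_assign_feasible_def using SA_feasible_inst[OF K(1)] by auto
    show "\<forall>\<alpha> \<ge> 1. integral_approx (inst_V K n) (inst_E K) (enc Root) 3 (inst_L K n) (\<lambda>_. K) \<alpha>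
            \<longrightarrow> \<alpha> \<ge> 1/4 * real n powr (1/10) * 1"
      using integrality_gap_inst[OF K(1,2)] by simp
  qed
qed

theorem theorem1:
  shows "\<exists>c1 c2 c3 \<epsilon> c4 \<delta> (N0::nat).
    c1 > 0 \<and> c2 > 0 \<and> c3 > 0 \<and> \<epsilon> > 0 \<and> c4 > 0 \<and> \<delta> > 0 \<and>
    (\<forall>n \<ge> N0. \<exists>V E s L k.
       mmda_instance V E s 3 L k \<and>
       c1 * real n \<le> real (card V) \<and> real (card V) \<le> c2 * real n \<and>
       (\<forall>u \<in> V - L 3. real (k u) \<ge> c3 * real n powr \<epsilon>) \<and>
       (\<exists>\<beta> \<ge> 1. SA_assign_feasible 1 V E s 3 L k \<beta> \<and>
          (\<forall>\<alpha> \<ge> 1. integral_approx V E s 3 L k \<alpha> \<longrightarrow> \<alpha> \<ge> c4 * real n powr \<delta> * \<beta>)))"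
proof (rule exI[of _ "1::real"], rule exI[of _ "2::real"], rule exI[of _ "1/4::real"],
    rule exI[of _ "1/5::real"], rule exI[of _ "1/4::real"], rule exI[of _ "1/10::real"],
    rule exI[of _ "1024::nat"], intro conjI allI impI gap_instance)
qed simp_all

end
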